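(* Let $G\subset\mathbb R^r$ be a lattice of rank $r$ and let $\mathcal D$ be a linear partial differential operator on $\mathbb R^r$ with continuous $G$-periodic (real or complex) coefficients. Let $\mathcal S$ be the space of all classical global solutions $u$ of $\mathcal Du=0$ on $\mathbb R^r$, and $\mathcal S^G$ the subspace of $G$-periodic solutions. If $\dim\mathcal S^G<\infty$, then $\dim P_n^G(\mathcal S)<\infty$ for every $n\in\mathbb Z_+$, where $$P_n^G(\mathcal S)=\Big\{p=\sum_{j_1+\dots+j_r\le n}f_{j_1,\dots,j_r}(x)\,x_1^{j_1}\cdots x_r^{j_r}\ :\ \text{all } f_{j_1,\dots,j_r}\text{ continuous and } G\text{-periodic},\ \mathcal Dp=0\Big\}.$$
   Context: A function $f$ on $\mathbb R^r$ is $G$-periodic if $f(x+g)=f(x)$ for all $g\in G$, $x\in\mathbb R^r$; $x_1,\dots,x_r$ are the standard coordinates. *)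

theory Defs
  imports "HOL-Analysis.Analysis"
begin

text \<open>Lattice of full rank r in R^r (here R^r = real^'n, r = CARD('n)):
  the integer span of a basis.\<close>
definition full_lattice :: "(real^'n) set \<Rightarrow> bool" where
  "full_lattice G \<longleftrightarrow> (\<exists>b :: 'n \<Rightarrow> real^'n. inj b \<and> independent (range b) \<and>
      G = {(\<Sum>i\<in>UNIV. of_int (k i) *\<^sub>R b i) | k :: 'n \<Rightarrow> int. True})"

definition periodic_wrt :: "(real^'n) set \<Rightarrow> (real^'n \<Rightarrow> 'a) \<Rightarrow> bool" where
  "periodic_wrt G f \<longleftrightarrow> (\<forall>g\<in>G. \<forall>x. f (x + g) = f x)"

definition partial :: "'n \<Rightarrow> (real^'n \<Rightarrow> complex) \<Rightarrow> real^'n \<Rightarrow> complex" where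
  "partial i u x = vector_derivative (\<lambda>t. u (x + t *\<^sub>R axis i 1)) (at 0)"

fun pdl :: "'n list \<Rightarrow> (real^'n \<Rightarrow> complex) \<Rightarrow> real^'n \<Rightarrow> complex" where
  "pdl [] u = u"
| "pdl (i # w) u = partial i (pdl w u)"

definition Ck :: "nat \<Rightarrow> (real^'n \<Rightarrow> complex) \<Rightarrow> bool" where
  "Ck m u \<longleftrightarrow> (\<forall>w. length w \<le> m \<longrightarrow> continuous_on UNIV (pdl w u)) \<and>
     (\<forall>w i x. length w < m \<longrightarrow>
        ((\<lambda>t. pdl w u (x + t *\<^sub>R axis i 1)) has_vector_derivative pdl (i # w) u x) (at 0))"

definition Dop :: "nat \<Rightarrow> ('n list \<Rightarrow> real^'n \<Rightarrow> complex) \<Rightarrow> (real^'n \<Rightarrow> complex) \<Rightarrow> real^'n \<Rightarrow> complex" where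
  "Dop m a u x = (\<Sum>w\<in>{w. length w \<le> m}. a w x * pdl w u x)"

definition solutions :: "nat \<Rightarrow> ('n list \<Rightarrow> real^'n \<Rightarrow> complex) \<Rightarrow> (real^'n \<Rightarrow> complex) set" where
  "solutions m a = {u. Ck m u \<and> (\<forall>x. Dop m a u x = 0)}"

definition fin_dim :: "('a \<Rightarrow> complex) set \<Rightarrow> bool" where
  "fin_dim V \<longleftrightarrow> (\<exists>B. finite B \<and> V \<subseteq> {(\<lambda>x. \<Sum>b\<in>B. c b * b x) | c. True})"

definition monom :: "('n \<Rightarrow> nat) \<Rightarrow> real^'n \<Rightarrow> complex" where
  "monom j x = complex_of_real (\<Prod>i\<in>UNIV. (x $ i) ^ j i)"

definition PnG :: "nat \<Rightarrow> (real^'n) set \<Rightarrow> (real^'n \<Rightarrow> complex) set \<Rightarrow> (real^'n \<Rightarrow> complex) set" where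
  "PnG n G S = {p \<in> S. \<exists>f :: ('n \<Rightarrow> nat) \<Rightarrow> real^'n \<Rightarrow> complex.
      (\<forall>j. continuous_on UNIV (f j) \<and> periodic_wrt G (f j)) \<and>
      p = (\<lambda>x. \<Sum>j\<in>{j. (\<Sum>i\<in>UNIV. j i) \<le> n}. f j x * monom j x)}"

end

(*
  Call u a quasi-polynomial of degree at most n if it is a sum of G-periodic functions
  times monomials of degree at most n.  For g in G the difference operator
  Delta_g u = u(. + g) - u maps solutions to solutions, since the coefficients are
  G-periodic, and lowers the degree of a quasi-polynomial by one, since
  Delta_g (x_k f) = x_k Delta_g f + g_k f(. + g) and quasi-polynomials of degree 0 are
  periodic.  Hence on the space V_(n+1) of solutions that are quasi-polynomials of degree
  at most n+1, the difference operators along a basis b_1, ..., b_r of G map into V_n,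
  and their common kernel consists of G-periodic solutions.  Rank-nullity, applied to
  these r operators in turn, and induction on n show that every V_n is
  finite-dimensional, and P_n^G(S) is contained in V_n.
*)
theory Submission
  imports Defs "HOL-Library.Function_Algebras"
begin

section \<open>Finite-dimensional spaces of complex-valued functions\<close>

definition scaleC_fun :: "complex \<Rightarrow> ('a \<Rightarrow> complex) \<Rightarrow> 'a \<Rightarrow> complex" where
  "scaleC_fun c f = (\<lambda>x. c * f x)"

interpretation cfun: vector_space "scaleC_fun :: complex \<Rightarrow> ('a \<Rightarrow> complex) \<Rightarrow> 'a \<Rightarrow> complex"
  by unfold_locales (auto simp: scaleC_fun_def fun_eq_iff algebra_simps)

lemma sum_apply: "sum h B x = (\<Sum>b\<in>B. h b x)"
  by (induction B rule: infinite_finite_induct) auto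

lemma fin_dim_iff_span: "fin_dim V \<longleftrightarrow> (\<exists>B. finite B \<and> V \<subseteq> cfun.span B)"
proof -
  have span: "cfun.span B = {(\<lambda>x. \<Sum>b\<in>B. c b * b x) | c. True}" if "finite B" for B
    using that by (auto simp: cfun.span_finite scaleC_fun_def fun_eq_iff sum_apply)
  show ?thesis
    unfolding fin_dim_def by (intro ex_cong1 conj_cong refl) (simp only: span)
qed

lemma fin_dim_subset: "fin_dim B \<Longrightarrow> A \<subseteq> B \<Longrightarrow> fin_dim A"
  unfolding fin_dim_def by blast

lemma fin_dim_subspace_obtains_basis:
  fixes V :: "('a \<Rightarrow> complex) set"
  assumes "cfun.subspace V" "fin_dim V"
  obtains B where "B \<subseteq> V" "finite B" "cfun.span B = V"
proof -
  obtain C where C: "finite C" "V \<subseteq> cfun.span C"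
    using assms(2) fin_dim_iff_span by blast
  obtain B where B: "B \<subseteq> V" "cfun.independent B" "V \<subseteq> cfun.span B"
    by (rule cfun.basis_exists[of V])
  have "finite B"
    using cfun.independent_span_bound[OF C(1) B(2)] B(1) C(2) by (meson order_trans)
  moreover have "cfun.span B = V"
    by (rule cfun.span_subspace[OF B(1) B(3) assms(1)])
  ultimately show thesis
    using B(1) that by blast
qed

lemma fin_dim_if_image_kernel:
  assumes V: "cfun.subspace V" and L: "Vector_Spaces.linear scaleC_fun scaleC_fun L"
    and image: "fin_dim (L ` V)" and kernel: "fin_dim {v \<in> V. L v = 0}"
  shows "fin_dim V"
proof -
  interpret L: module_hom scaleC_fun scaleC_fun L
    using L by (unfold module_hom_iff_linear)
  obtain C where C: "C \<subseteq> L ` V" "finite C" "cfun.span C = L ` V"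
    using fin_dim_subspace_obtains_basis[OF L.subspace_image[OF V] image] by blast
  obtain K where K: "finite K" "{v \<in> V. L v = 0} \<subseteq> cfun.span K"
    using kernel fin_dim_iff_span by blast
  define p where "p = inv_into V L"
  have p: "p c \<in> V" "L (p c) = c" if "c \<in> C" for c
  proof -
    have "c \<in> L ` V"
      using that C(1) by blast
    then show "p c \<in> V" "L (p c) = c"
      unfolding p_def by (rule inv_into_into, rule f_inv_into_f)
  qed
  have "V \<subseteq> cfun.span (p ` C \<union> K)"
  proof
    fix v assume v: "v \<in> V"
    have "L ` p ` C = C"
      using p(2) by (simp add: image_image)
    have "L v \<in> cfun.span (L ` p ` C)"
      unfolding \<open>L ` p ` C = C\<close> C(3) using v by (rule imageI)
    then have "L v \<in> L ` cfun.span (p ` C)"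
      by (simp only: L.span_image)
    then obtain w where w: "L v = L w" "w \<in> cfun.span (p ` C)"
      by (rule imageE)
    have "cfun.span (p ` C) \<subseteq> V"
      using p(1) V by (intro cfun.span_minimal) auto
    then have "v - w \<in> V"
      using v w(2) by (blast intro: cfun.subspace_diff[OF V])
    moreover have "L (v - w) = 0"
      using w(1) by (simp add: L.diff)
    ultimately have "v - w \<in> {v \<in> V. L v = 0}"
      by (intro CollectI conjI)
    with K(2) have "v - w \<in> cfun.span K"
      by (rule subsetD)
    then have "v - w \<in> cfun.span (p ` C \<union> K)"
      using cfun.span_mono[of K "p ` C \<union> K"] by blast
    moreover have "w \<in> cfun.span (p ` C \<union> K)"
      using w(2) cfun.span_mono[of "p ` C" "p ` C \<union> K"] by blast
    ultimately have "w + (v - w) \<in> cfun.span (p ` C \<union> K)"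
      by (rule cfun.span_add[rotated])
    then show "v \<in> cfun.span (p ` C \<union> K)"
      by simp
  qed
  moreover have "finite (p ` C \<union> K)"
    using C(2) K(1) by blast
  ultimately show ?thesis
    unfolding fin_dim_iff_span by blast
qed

lemma fin_dim_if_common_kernel:
  assumes "finite I" "cfun.subspace V"
    and "\<And>i. i \<in> I \<Longrightarrow> Vector_Spaces.linear scaleC_fun scaleC_fun (L i)"
    and "\<And>i. i \<in> I \<Longrightarrow> fin_dim (L i ` V)"
    and "fin_dim {v \<in> V. \<forall>i\<in>I. L i v = 0}"
  shows "fin_dim V"
  using assms
proof (induction I arbitrary: V rule: finite_induct)
  case empty
  then show ?case by simp
next
  case (insert i I)
  let ?K = "{v \<in> V. L i v = 0}"
  have lin: "Vector_Spaces.linear scaleC_fun scaleC_fun (L i)"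
    using insert.prems(2) by blast
  have subspace: "cfun.subspace ?K"
    using cfun.subspace_inter[OF insert.prems(1) module_hom.subspace_kernel[OF lin[unfolded linear_iff_module_hom]]]
    by (simp add: Int_def)
  have images: "fin_dim (L j ` ?K)" if "j \<in> I" for j
    using insert.prems(3)[of j] that by (auto elim!: fin_dim_subset)
  have "{v \<in> ?K. \<forall>j\<in>I. L j v = 0} = {v \<in> V. \<forall>j\<in>insert i I. L j v = 0}"
    by auto
  then have kernel: "fin_dim {v \<in> ?K. \<forall>j\<in>I. L j v = 0}"
    using insert.prems(4) by (simp only:)
  have "fin_dim ?K"
    using insert.IH[OF subspace _ _ kernel] insert.prems(2) images by blast
  then show ?case
    using fin_dim_if_image_kernel[OF insert.prems(1) lin] insert.prems(3) by blast
qed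

lemma cfun_subspaceI:
  assumes "(\<lambda>x. 0) \<in> S" and "\<And>c u v. u \<in> S \<Longrightarrow> v \<in> S \<Longrightarrow> (\<lambda>x. c * u x + v x) \<in> S"
  shows "cfun.subspace S"
  unfolding cfun.subspace_def
proof (intro conjI ballI allI)
  show "0 \<in> S"
    using assms(1) by (simp add: zero_fun_def)
  show "u + v \<in> S" if "u \<in> S" "v \<in> S" for u v
    using assms(2)[OF that, of 1] by (simp add: plus_fun_def)
  show "scaleC_fun c u \<in> S" if "u \<in> S" for c u
    using assms(2)[OF that assms(1), of c] by (simp add: scaleC_fun_def)
qed

section \<open>The solution space\<close>

lemma pdl_translate: "pdl w (\<lambda>x. u (x + g)) = (\<lambda>x. pdl w u (x + g))"
proof (induction w)
  case Nil
  then show ?case by simp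
next
  case (Cons i w)
  then show ?case
    by (simp add: partial_def add_ac)
qed

lemma Ck_translate: "Ck m u \<Longrightarrow> Ck m (\<lambda>x. u (x + g))"
  unfolding Ck_def pdl_translate
proof (intro conjI allI impI; elim conjE)
  fix w :: "'a list"
  assume "length w \<le> m" "\<forall>w. length w \<le> m \<longrightarrow> continuous_on UNIV (pdl w u)"
  then have "continuous_on UNIV (pdl w u)"
    by blast
  then show "continuous_on UNIV (\<lambda>x. pdl w u (x + g))"
    by (rule continuous_on_compose2) (auto intro!: continuous_intros)
next
  fix w :: "'a list" and i x
  assume "length w < m" and "\<forall>w i x. length w < m \<longrightarrow>
    ((\<lambda>t. pdl w u (x + t *\<^sub>R axis i 1)) has_vector_derivative pdl (i # w) u x) (at 0)"
  then have "((\<lambda>t. pdl w u ((x + g) + t *\<^sub>R axis i 1)) has_vector_derivative pdl (i # w) u (x + g)) (at 0)"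
    by blast
  then show "((\<lambda>t. pdl w u (x + t *\<^sub>R axis i 1 + g)) has_vector_derivative pdl (i # w) u (x + g)) (at 0)"
    by (simp add: add_ac)
qed

lemma Ck_has_vector_derivative:
  "Ck m u \<Longrightarrow> length w < m \<Longrightarrow>
    ((\<lambda>t. pdl w u (x + t *\<^sub>R axis i 1)) has_vector_derivative pdl (i # w) u x) (at 0)"
  by (simp add: Ck_def)

lemma pdl_lincomb:
  assumes u: "Ck m u" and v: "Ck m v" and "length w \<le> m"
  shows "pdl w (\<lambda>x. c * u x + v x) = (\<lambda>x. c * pdl w u x + pdl w v x)"
  using assms(3)
proof (induction w)
  case Nil
  then show ?case by simp
next
  case (Cons i w)
  then have "length w < m"
    by simp
  note du = Ck_has_vector_derivative[OF u this] and dv = Ck_has_vector_derivative[OF v this]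
  show ?case
  proof
    fix y
    have "((\<lambda>t. c * pdl w u (y + t *\<^sub>R axis i 1) + pdl w v (y + t *\<^sub>R axis i 1)) has_vector_derivative
        c * pdl (i # w) u y + pdl (i # w) v y) (at 0)"
      by (intro has_vector_derivative_add has_vector_derivative_mult_right du dv)
    then show "pdl (i # w) (\<lambda>x. c * u x + v x) y = c * pdl (i # w) u y + pdl (i # w) v y"
      using Cons by (simp add: partial_def vector_derivative_at)
  qed
qed

lemma Ck_lincomb:
  assumes u: "Ck m u" and v: "Ck m v"
  shows "Ck m (\<lambda>x. c * u x + v x)"
  unfolding Ck_def
proof (intro conjI allI impI)
  fix w :: "'a list"
  assume "length w \<le> m"
  moreover have "continuous_on UNIV (pdl w u)" "continuous_on UNIV (pdl w v)"
    using u v \<open>length w \<le> m\<close> by (auto simp: Ck_def)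
  ultimately show "continuous_on UNIV (pdl w (\<lambda>x. c * u x + v x))"
    by (simp add: pdl_lincomb[OF u v] continuous_intros)
next
  fix w :: "'a list" and i x
  assume lw: "length w < m"
  then have len_cons: "length (i # w) \<le> m" and len: "length w \<le> m"
    by auto
  show "((\<lambda>t. pdl w (\<lambda>x. c * u x + v x) (x + t *\<^sub>R axis i 1)) has_vector_derivative
      pdl (i # w) (\<lambda>x. c * u x + v x) x) (at 0)"
    unfolding pdl_lincomb[OF u v len_cons] pdl_lincomb[OF u v len]
    by (intro has_vector_derivative_add has_vector_derivative_mult_right
        Ck_has_vector_derivative[OF u lw] Ck_has_vector_derivative[OF v lw])
qed

lemma Dop_lincomb:
  assumes u: "Ck m u" and v: "Ck m v"
  shows "Dop m a (\<lambda>x. c * u x + v x) x = c * Dop m a u x + Dop m a v x"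
proof -
  have "Dop m a (\<lambda>x. c * u x + v x) x = (\<Sum>w | length w \<le> m. c * (a w x * pdl w u x) + a w x * pdl w v x)"
    unfolding Dop_def by (intro sum.cong refl, subst pdl_lincomb[OF u v]) (auto simp: algebra_simps)
  also have "\<dots> = c * Dop m a u x + Dop m a v x"
    unfolding Dop_def by (simp add: sum.distrib sum_distrib_left)
  finally show ?thesis .
qed

lemma pdl_zero: "pdl w (\<lambda>x. 0) = (\<lambda>x. 0)"
  by (induction w) (auto simp: partial_def)

lemma Ck_zero: "Ck m (\<lambda>x. 0)"
  unfolding Ck_def pdl_zero by auto

lemma subspace_solutions: "cfun.subspace (solutions m a)"
proof (rule cfun_subspaceI)
  show "(\<lambda>x. 0) \<in> solutions m a"
    by (simp add: solutions_def Dop_def Ck_zero pdl_zero)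
next
  fix c u v
  assume "u \<in> solutions m a" "v \<in> solutions m a"
  then have u: "Ck m u" and v: "Ck m v" and "Dop m a u x = 0" "Dop m a v x = 0" for x
    by (auto simp: solutions_def)
  then show "(\<lambda>x. c * u x + v x) \<in> solutions m a"
    by (simp add: solutions_def Ck_lincomb Dop_lincomb)
qed

lemma solutions_translate:
  assumes "u \<in> solutions m a" and "\<And>w x. length w \<le> m \<Longrightarrow> a w (x + g) = a w x"
  shows "(\<lambda>x. u (x + g)) \<in> solutions m a"
proof -
  have "Dop m a (\<lambda>x. u (x + g)) x = Dop m a u (x + g)" for x
    unfolding Dop_def pdl_translate by (intro sum.cong) (auto simp: assms(2))
  then show ?thesis
    using assms(1) Ck_translate by (auto simp: solutions_def)
qed

section \<open>Quasi-polynomials\<close>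

text \<open>The sums of G-periodic functions times monomials of degree at most n, generated
  inductively; unlike in \<^term>\<open>PnG\<close>, the periodic factors need not be continuous.\<close>

inductive quasi_poly :: "(real^'n) set \<Rightarrow> nat \<Rightarrow> (real^'n \<Rightarrow> complex) \<Rightarrow> bool" for G where
  periodic: "periodic_wrt G f \<Longrightarrow> quasi_poly G n f"
| add: "quasi_poly G n f \<Longrightarrow> quasi_poly G n h \<Longrightarrow> quasi_poly G n (\<lambda>x. f x + h x)"
| mult_coord: "quasi_poly G n f \<Longrightarrow> quasi_poly G (Suc n) (\<lambda>x. complex_of_real (x $ i) * f x)"
| Suc: "quasi_poly G n f \<Longrightarrow> quasi_poly G (Suc n) f"

lemma quasi_poly_zero: "quasi_poly G n (\<lambda>x. 0)"
  by (rule quasi_poly.periodic) (simp add: periodic_wrt_def)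

lemma quasi_poly_scale: "quasi_poly G n f \<Longrightarrow> quasi_poly G n (\<lambda>x. c * f x)"
proof (induction rule: quasi_poly.induct)
  case (periodic f n)
  then show ?case by (intro quasi_poly.periodic) (simp add: periodic_wrt_def)
next
  case (add n f h)
  then show ?case using quasi_poly.add[OF add.IH] by (simp add: algebra_simps)
next
  case (mult_coord n f i)
  then show ?case using quasi_poly.mult_coord[OF mult_coord.IH, of i] by (simp add: algebra_simps)
next
  case (Suc n f)
  then show ?case by (blast intro: quasi_poly.Suc)
qed

lemma subspace_quasi_poly: "cfun.subspace {f. quasi_poly G n f}"
  by (rule cfun_subspaceI) (auto intro: quasi_poly_zero quasi_poly.add quasi_poly_scale)

lemma quasi_poly_mono: "k \<le> n \<Longrightarrow> quasi_poly G k f \<Longrightarrow> quasi_poly G n f"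
  by (induction n rule: dec_induct) (auto intro: quasi_poly.Suc)

lemma quasi_poly_translate: "quasi_poly G n f \<Longrightarrow> g \<in> G \<Longrightarrow> quasi_poly G n (\<lambda>x. f (x + g))"
proof (induction rule: quasi_poly.induct)
  case (periodic f n)
  then have "(\<lambda>x. f (x + g)) = f"
    by (auto simp: periodic_wrt_def)
  then show ?case
    using periodic quasi_poly.periodic by simp
next
  case (add n f h)
  then show ?case by (auto intro: quasi_poly.add)
next
  case (mult_coord n f i)
  then have "quasi_poly G n (\<lambda>x. f (x + g))"
    by blast
  then have "quasi_poly G (Suc n) (\<lambda>x. complex_of_real (x $ i) * f (x + g) + complex_of_real (g $ i) * f (x + g))"
    by (intro quasi_poly.add quasi_poly.mult_coord quasi_poly.Suc quasi_poly_scale)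
  then show ?case
    by (simp add: algebra_simps)
next
  case (Suc n f)
  then show ?case by (auto intro: quasi_poly.Suc)
qed

lemma quasi_poly_0_periodic: "quasi_poly G 0 f \<Longrightarrow> periodic_wrt G f"
  by (induction "0::nat" f rule: quasi_poly.induct) (auto simp: periodic_wrt_def)

lemma quasi_poly_difference:
  assumes "quasi_poly G n f" and "g \<in> G"
  shows "quasi_poly G (n - 1) (\<lambda>x. f (x + g) - f x)"
  using assms(1)
proof (induction rule: quasi_poly.induct)
  case (periodic f n)
  then have "(\<lambda>x. f (x + g) - f x) = (\<lambda>x. 0)"
    using assms(2) by (auto simp: periodic_wrt_def)
  then show ?case
    by (simp add: quasi_poly_zero)
next
  case (add n f h)
  then show ?case
    using quasi_poly.add[OF add.IH] by (simp add: algebra_simps)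
next
  case (mult_coord n f i)
  have eq: "(\<lambda>x. complex_of_real ((x + g) $ i) * f (x + g) - complex_of_real (x $ i) * f x)
      = (\<lambda>x. complex_of_real (x $ i) * (f (x + g) - f x) + complex_of_real (g $ i) * f (x + g))"
    by (auto simp: algebra_simps)
  have "quasi_poly G n (\<lambda>x. complex_of_real (x $ i) * (f (x + g) - f x))"
  proof (cases n)
    case 0
    then have "periodic_wrt G f"
      using mult_coord.hyps by (simp add: quasi_poly_0_periodic)
    then have "f (x + g) = f x" for x
      using assms(2) unfolding periodic_wrt_def by blast
    then show ?thesis
      by (simp add: quasi_poly_zero)
  next
    case (Suc k)
    then show ?thesis
      using quasi_poly.mult_coord[OF mult_coord.IH] by simp
  qed
  moreover have "quasi_poly G n (\<lambda>x. complex_of_real (g $ i) * f (x + g))"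
    by (intro quasi_poly_scale quasi_poly_translate mult_coord.hyps assms(2))
  ultimately show ?case
    unfolding diff_Suc_1 eq by (rule quasi_poly.add)
next
  case (Suc n f)
  then show ?case
    using quasi_poly_mono[OF diff_le_self Suc.IH] by simp
qed

lemma quasi_poly_mult_coord_power:
  "quasi_poly G n f \<Longrightarrow> quasi_poly G (n + k) (\<lambda>x. complex_of_real (x $ i) ^ k * f x)"
proof (induction k)
  case 0
  then show ?case by simp
next
  case (Suc k)
  then show ?case
    using quasi_poly.mult_coord[OF Suc.IH[OF Suc.prems], of i] by (simp add: mult.assoc)
qed

lemma quasi_poly_periodic_mult_monom:
  fixes j :: "'n::finite \<Rightarrow> nat"
  assumes "periodic_wrt G f"
  shows "quasi_poly G (\<Sum>i\<in>UNIV. j i) (\<lambda>x. f x * monom j x)"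
proof -
  have "quasi_poly G (\<Sum>i\<in>I. j i) (\<lambda>x. (\<Prod>i\<in>I. complex_of_real (x $ i) ^ j i) * f x)" if "finite I" for I
    using that
  proof (induction I rule: finite_induct)
    case empty
    then show ?case
      using assms by (simp add: quasi_poly.periodic)
  next
    case (insert i I)
    then show ?case
      using quasi_poly_mult_coord_power[OF insert.IH, of "j i" i] by (simp add: mult.assoc add.commute)
  qed
  then show ?thesis
    by (simp add: monom_def mult.commute)
qed

lemma quasi_poly_sum:
  assumes "\<And>j. j \<in> J \<Longrightarrow> quasi_poly G n (h j)"
  shows "quasi_poly G n (\<lambda>x. \<Sum>j\<in>J. h j x)"
proof -
  have "(\<lambda>x. \<Sum>j\<in>J. h j x) = sum h J"
    by (simp add: fun_eq_iff sum_apply)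
  then show ?thesis
    using cfun.subspace_sum[OF subspace_quasi_poly, of J h] assms by simp
qed

lemma PnG_subset_quasi_poly: "PnG n G S \<subseteq> {u \<in> S. quasi_poly G n u}"
proof
  fix p
  assume "p \<in> PnG n G S"
  then obtain f where p: "p \<in> S" "\<forall>j. continuous_on UNIV (f j) \<and> periodic_wrt G (f j)"
    and p_eq: "p = (\<lambda>x. \<Sum>j\<in>{j. (\<Sum>i\<in>UNIV. j i) \<le> n}. f j x * monom j x)"
    unfolding PnG_def by (elim CollectE conjE exE)
  have "quasi_poly G n (\<lambda>x. f j x * monom j x)" if "(\<Sum>i\<in>UNIV. j i) \<le> n" for j
    using that p(2) quasi_poly_mono quasi_poly_periodic_mult_monom by metis
  then have "quasi_poly G n p"
    unfolding p_eq by (intro quasi_poly_sum) simp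
  with p(1) show "p \<in> {u \<in> S. quasi_poly G n u}"
    by simp
qed

definition int_span :: "('i \<Rightarrow> 'a::real_vector) \<Rightarrow> 'a set" where
  "int_span b = {(\<Sum>i\<in>UNIV. of_int (k i) *\<^sub>R b i) | k :: 'i \<Rightarrow> int. True}"

lemma full_lattice_iff_int_span:
  "full_lattice G \<longleftrightarrow> (\<exists>b :: 'n \<Rightarrow> real^'n. inj b \<and> independent (range b) \<and> G = int_span b)"
  by (simp add: full_lattice_def int_span_def)

lemma basis_in_int_span:
  fixes b :: "'i::finite \<Rightarrow> 'a::real_vector"
  shows "b i \<in> int_span b"
proof -
  define k :: "'i \<Rightarrow> int" where "k l = (if l = i then 1 else 0)" for l
  have "(\<Sum>l\<in>UNIV. of_int (k l) *\<^sub>R b l) = (\<Sum>l\<in>UNIV. if l = i then b l else 0)"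
    by (rule sum.cong) (auto simp: k_def)
  also have "\<dots> = b i"
    by simp
  finally have "(\<Sum>l\<in>UNIV. of_int (k l) *\<^sub>R b l) = b i" .
  then show ?thesis
    unfolding int_span_def by (intro CollectI exI[of _ k] conjI TrueI) (rule sym)
qed

lemma periodic_int_multiple:
  fixes v :: "'a::real_vector"
  assumes "\<And>x. f (x + v) = f x"
  shows "f (x + of_int k *\<^sub>R v) = f x"
proof (induction k rule: int_induct[where k = 0])
  case base
  then show ?case by simp
next
  case (step1 k)
  have "f (x + of_int (k + 1) *\<^sub>R v) = f ((x + of_int k *\<^sub>R v) + v)"
    by (simp add: algebra_simps)
  then show ?case
    using step1.IH assms by simp
next
  case (step2 k)
  have "f (x + of_int k *\<^sub>R v) = f ((x + of_int (k - 1) *\<^sub>R v) + v)"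
    by (simp add: algebra_simps)
  then show ?case
    using step2.IH assms by simp
qed

lemma periodic_wrt_int_span:
  fixes b :: "'i::finite \<Rightarrow> real^'n"
  assumes "\<And>i x. f (x + b i) = f x"
  shows "periodic_wrt (int_span b) f"
proof -
  have "f (x + (\<Sum>i\<in>I. of_int (k i) *\<^sub>R b i)) = f x" if "finite I" for I x k
    using that
  proof (induction I arbitrary: x rule: finite_induct)
    case empty
    then show ?case by simp
  next
    case (insert i I)
    then have "f (x + (\<Sum>i\<in>insert i I. of_int (k i) *\<^sub>R b i)) =
        f ((x + (\<Sum>i\<in>I. of_int (k i) *\<^sub>R b i)) + of_int (k i) *\<^sub>R b i)"
      by (simp add: algebra_simps)
    then show ?case
      using insert.IH periodic_int_multiple[where f = f and v = "b i"] assms by simp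
  qed
  then show ?thesis
    unfolding periodic_wrt_def int_span_def by auto
qed

section \<open>Finite dimension of the quasi-polynomial solutions\<close>

lemma linear_difference: "Vector_Spaces.linear scaleC_fun scaleC_fun (\<lambda>u x. u (x + g) - u x)"
  unfolding Vector_Spaces.linear_iff
  by (auto simp: cfun.vector_space_axioms scaleC_fun_def fun_eq_iff algebra_simps)

lemma difference_quasi_poly_solution:
  assumes coeffs: "\<And>w x. length w \<le> m \<Longrightarrow> a w (x + g) = a w x" and "g \<in> G"
    and u: "u \<in> solutions m a" "quasi_poly G (Suc n) u"
  shows "(\<lambda>x. u (x + g) - u x) \<in> solutions m a" and "quasi_poly G n (\<lambda>x. u (x + g) - u x)"
proof -
  have "(\<lambda>x. u (x + g)) - u \<in> solutions m a"
    using solutions_translate[OF u(1) coeffs] u(1) by (simp add: cfun.subspace_diff[OF subspace_solutions])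
  then show "(\<lambda>x. u (x + g) - u x) \<in> solutions m a"
    by (simp add: fun_diff_def)
  show "quasi_poly G n (\<lambda>x. u (x + g) - u x)"
    using quasi_poly_difference[OF u(2) \<open>g \<in> G\<close>] by simp
qed

lemma fin_dim_quasi_poly_solutions:
  fixes b :: "'n::finite \<Rightarrow> real^'n"
  assumes coeffs: "\<And>w. length w \<le> m \<Longrightarrow> periodic_wrt (int_span b) (a w)"
    and periodic_solutions: "fin_dim {u \<in> solutions m a. periodic_wrt (int_span b) u}"
  shows "fin_dim {u \<in> solutions m a. quasi_poly (int_span b) n u}"
proof (induction n)
  case 0
  have "{u \<in> solutions m a. quasi_poly (int_span b) 0 u} \<subseteq> {u \<in> solutions m a. periodic_wrt (int_span b) u}"
    using quasi_poly_0_periodic by blast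
  then show ?case
    by (rule fin_dim_subset[OF periodic_solutions])
next
  case (Suc n)
  let ?V = "{u \<in> solutions m a. quasi_poly (int_span b) (Suc n) u}"
  define \<Delta> where "\<Delta> i u = (\<lambda>x. u (x + b i) - u x)" for i and u :: "real^'n \<Rightarrow> complex"
  have subspace: "cfun.subspace ?V"
    using cfun.subspace_inter[OF subspace_solutions subspace_quasi_poly] by (simp add: Int_def)
  have linear: "Vector_Spaces.linear scaleC_fun scaleC_fun (\<Delta> i)" for i
    unfolding \<Delta>_def by (rule linear_difference)
  have images: "fin_dim (\<Delta> i ` ?V)" for i
  proof -
    have "a w (x + b i) = a w x" if "length w \<le> m" for w x
      using coeffs[OF that] basis_in_int_span unfolding periodic_wrt_def by blast
    then have "\<Delta> i u \<in> solutions m a" "quasi_poly (int_span b) n (\<Delta> i u)" if "u \<in> ?V" for u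
      using that basis_in_int_span unfolding \<Delta>_def by (blast intro: difference_quasi_poly_solution)+
    then have "\<Delta> i ` ?V \<subseteq> {u \<in> solutions m a. quasi_poly (int_span b) n u}"
      by (simp add: image_subset_iff)
    then show ?thesis
      by (rule fin_dim_subset[OF Suc.IH])
  qed
  have "{v \<in> ?V. \<forall>i\<in>UNIV. \<Delta> i v = 0} \<subseteq> {u \<in> solutions m a. periodic_wrt (int_span b) u}"
  proof (intro subsetI CollectI conjI; elim CollectE conjE)
    fix v
    assume "\<forall>i\<in>UNIV. \<Delta> i v = 0"
    then have "\<Delta> i v x = 0" for i x
      by simp
    then have "v (x + b i) = v x" for i x
      by (simp add: \<Delta>_def)
    then show "periodic_wrt (int_span b) v"
      by (rule periodic_wrt_int_span)
  qed
  then have kernel: "fin_dim {v \<in> ?V. \<forall>i\<in>UNIV. \<Delta> i v = 0}"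
    by (rule fin_dim_subset[OF periodic_solutions])
  show ?case
    by (rule fin_dim_if_common_kernel[OF finite_class.finite_UNIV subspace _ _ kernel]; rule linear images)
qed

theorem corollary3p5:
  fixes G :: "(real^'n) set" and m :: nat and a :: "'n list \<Rightarrow> real^'n \<Rightarrow> complex"
  assumes "full_lattice G"
    and "\<And>w. length w \<le> m \<Longrightarrow> continuous_on UNIV (a w) \<and> periodic_wrt G (a w)"
    and "fin_dim {u \<in> solutions m a. periodic_wrt G u}"
  shows "\<forall>n. fin_dim (PnG n G (solutions m a))"
proof
  fix n
  have "\<exists>b :: 'n \<Rightarrow> real^'n. G = int_span b"
    using assms(1) unfolding full_lattice_iff_int_span by (elim exE conjE) (rule exI, assumption)
  then obtain b :: "'n \<Rightarrow> real^'n" where G: "G = int_span b" ..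
  have coeffs: "periodic_wrt (int_span b) (a w)" if "length w \<le> m" for w
    using assms(2)[OF that] unfolding G by (rule conjunct2)
  have "fin_dim {u \<in> solutions m a. quasi_poly G n u}"
    unfolding G by (rule fin_dim_quasi_poly_solutions[OF coeffs assms(3)[unfolded G]])
  then show "fin_dim (PnG n G (solutions m a))"
    using PnG_subset_quasi_poly by (rule fin_dim_subset)
qed

end
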